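(* Let $S,\alpha$ be real symmetric $n\times n$ matrices and let $V(t)$ be the matrix-valued solution of $\frac{dV}{dt}=[S,V]+\alpha$ with $V(0)=0$. Then $\mathrm{Tr}\,V(t)^2\ge t^2\,\mathrm{Tr}\,\alpha^2$ for all real $t$. *)

theory Defs
  imports "HOL-Analysis.Analysis"
begin

end

theory Submission
  imports Defs
begin

text \<open>
  The velocity \<open>W = V'\<close> solves the commutator flow \<open>W' = [S, W]\<close> with \<open>W 0 = \<alpha>\<close>.
  For any two solutions \<open>X, Z\<close> of this flow, \<open>tr (X Z)\<close> is constant, and since \<open>S\<close> is
  symmetric, \<open>r \<mapsto> W (t - r)\<^sup>T\<close> is again a solution. Comparing the two at \<open>r = 0\<close> and
  \<open>r = t/2\<close> gives \<open>tr (\<alpha> W t) = tr (W (t/2) W (t/2)\<^sup>T) \<ge> tr (W (t/2)\<^sup>2) = tr \<alpha>\<^sup>2\<close>.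
  Now \<open>(tr (V W))' = tr (\<alpha> W)\<close>, so \<open>h t = tr (V t W t) - t tr \<alpha>\<^sup>2\<close> is nondecreasing with
  \<open>h 0 = 0\<close>; as \<open>2 h\<close> is the derivative of \<open>tr (V t)\<^sup>2 - t\<^sup>2 tr \<alpha>\<^sup>2\<close>, the latter attains
  its minimum \<open>0\<close> at \<open>t = 0\<close>.
\<close>

definition commutator :: "'a::ring_1^'n^'n \<Rightarrow> 'a^'n^'n \<Rightarrow> 'a^'n^'n"
  where "commutator A B = A ** B - B ** A"

lemma matrix_add_rdistrib: "(A + B) ** C = A ** C + B ** (C :: 'a::semiring_1^'p^'n)"
  by (vector matrix_matrix_mult_def sum.distrib[symmetric] field_simps)

lemma matrix_diff_ldistrib: "A ** (B - C) = A ** B - A ** (C :: 'a::ring_1^'p^'n)"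
  by (vector matrix_matrix_mult_def sum_subtractf[symmetric] field_simps)

lemma matrix_diff_rdistrib: "(A - B) ** C = A ** C - B ** (C :: 'a::ring_1^'p^'n)"
  by (vector matrix_matrix_mult_def sum_subtractf[symmetric] field_simps)

lemma transpose_diff: "transpose (A - B) = transpose A - transpose (B :: 'a::ab_group_add^'n^'m)"
  by (simp add: transpose_def vec_eq_iff)

lemma trace_transpose: "trace (transpose A) = trace (A :: 'a::semiring_1^'n^'n)"
  by (simp add: trace_def transpose_def)

lemma transpose_commutator_symmetric:
  "transpose A = A \<Longrightarrow> transpose (commutator A B) = - commutator A (transpose (B :: 'a::comm_ring_1^'n^'n))"
  by (simp add: commutator_def transpose_diff matrix_transpose_mul)

lemma trace_commutator_mult:
  "trace (commutator A B ** C) = - trace (B ** commutator A (C :: 'a::comm_ring_1^'n^'n))"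
  by (simp add: commutator_def matrix_diff_ldistrib matrix_diff_rdistrib trace_sub matrix_mul_assoc)
     (metis trace_mul_sym matrix_mul_assoc)

lemma trace_square_le_trace_mult_transpose:
  "trace (M ** M) \<le> trace (M ** transpose (M :: real^'n^'n))"
proof -
  have "0 \<le> (\<Sum>i\<in>UNIV. \<Sum>k\<in>UNIV. (M$i$k - M$k$i)\<^sup>2)"
    by (intro sum_nonneg) auto
  also have "\<dots> = (\<Sum>i\<in>UNIV. \<Sum>k\<in>UNIV. (M$i$k)\<^sup>2) + (\<Sum>i\<in>UNIV. \<Sum>k\<in>UNIV. (M$k$i)\<^sup>2)
      - 2 * (\<Sum>i\<in>UNIV. \<Sum>k\<in>UNIV. M$i$k * M$k$i)"
    by (simp add: power2_eq_square algebra_simps sum.distrib sum_subtractf sum_distrib_left)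
  also have "(\<Sum>i\<in>UNIV. \<Sum>k\<in>UNIV. (M$k$i)\<^sup>2) = (\<Sum>i\<in>UNIV. \<Sum>k\<in>UNIV. (M$i$k)\<^sup>2)"
    by (rule sum.swap)
  finally show ?thesis
    by (simp add: trace_def matrix_matrix_mult_def transpose_def power2_eq_square)
qed

lemma bounded_bilinear_matrix_matrix_mult:
  "bounded_bilinear ((**) :: real^'n^'m \<Rightarrow> real^'p^'n \<Rightarrow> real^'p^'m)"
  unfolding bilinear_conv_bounded_bilinear[symmetric] bilinear_def
  by (auto intro!: linearI simp: matrix_add_ldistrib matrix_add_rdistrib
      matrix_scalar_ac scalar_matrix_assoc)

lemma bounded_linear_trace: "bounded_linear (trace :: real^'n^'n \<Rightarrow> real)"
  unfolding linear_conv_bounded_linear[symmetric]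
  by (rule linearI) (simp_all add: trace_def sum.distrib sum_distrib_left)

lemma bounded_linear_transpose: "bounded_linear (transpose :: real^'n^'m \<Rightarrow> real^'m^'n)"
  unfolding linear_conv_bounded_linear[symmetric]
  by (rule linearI) (simp_all add: transpose_def vec_eq_iff)

lemma bounded_linear_commutator: "bounded_linear (commutator (A :: real^'n^'n))"
  unfolding commutator_def
  using bounded_linear_sub[OF bounded_bilinear.bounded_linear_right bounded_bilinear.bounded_linear_left,
      OF bounded_bilinear_matrix_matrix_mult bounded_bilinear_matrix_matrix_mult]
  by blast

lemma has_vector_derivative_commutator:
  fixes A :: "real^'n^'n"
  shows "(X has_vector_derivative X') F \<Longrightarrow>
    ((\<lambda>t. commutator A (X t)) has_vector_derivative commutator A X') F"
  by (rule bounded_linear.has_vector_derivative[OF bounded_linear_commutator])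

lemma has_real_derivative_trace_mult:
  fixes X Z :: "real \<Rightarrow> real^'n^'n"
  assumes "(X has_vector_derivative X') (at t within s)" and "(Z has_vector_derivative Z') (at t within s)"
  shows "((\<lambda>t. trace (X t ** Z t)) has_real_derivative
           trace (X' ** Z t) + trace (X t ** Z')) (at t within s)"
  using bounded_linear.has_vector_derivative[OF bounded_linear_trace
      bounded_bilinear.has_vector_derivative[OF bounded_bilinear_matrix_matrix_mult assms]]
  by (simp add: has_real_derivative_iff_has_vector_derivative trace_add add.commute)

lemma commutator_flow_trace_mult_const:
  fixes X Z :: "real \<Rightarrow> real^'n^'n"
  assumes "\<And>t. (X has_vector_derivative commutator A (X t)) (at t)"
    and "\<And>t. (Z has_vector_derivative commutator A (Z t)) (at t)"
  shows "trace (X s ** Z s) = trace (X t ** Z t)"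
proof -
  have "\<forall>r. ((\<lambda>t. trace (X t ** Z t)) has_real_derivative 0) (at r)"
    using has_real_derivative_trace_mult[OF assms(1,2)] by (simp add: trace_commutator_mult)
  then show ?thesis
    by (rule DERIV_isconst_all)
qed

lemma commutator_flow_reflect_transpose:
  fixes X :: "real \<Rightarrow> real^'n^'n"
  assumes "transpose A = A" and "\<And>t. (X has_vector_derivative commutator A (X t)) (at t)"
  shows "((\<lambda>r. transpose (X (t - r))) has_vector_derivative
           commutator A (transpose (X (t - r)))) (at r)"
proof -
  have "((\<lambda>r. t - r) has_vector_derivative -1) (at r)"
    by (auto intro!: derivative_eq_intros)
  then have "((X \<circ> (\<lambda>r. t - r)) has_vector_derivative - commutator A (X (t - r))) (at r)"
    using vector_diff_chain_at assms(2) by fastforce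
  from bounded_linear.has_vector_derivative[OF bounded_linear_transpose this]
  show ?thesis
    using transpose_commutator_symmetric[OF assms(1)]
    by (simp add: o_def linear_neg[OF bounded_linear.linear[OF bounded_linear_transpose]])
qed

lemma commutator_flow_trace_mult_ge:
  fixes X :: "real \<Rightarrow> real^'n^'n"
  assumes "transpose A = A" and "transpose (X 0) = X 0"
    and flow: "\<And>t. (X has_vector_derivative commutator A (X t)) (at t)"
  shows "trace (X 0 ** X 0) \<le> trace (X 0 ** X t)"
proof -
  define Z where "Z r = transpose (X (t - r))" for r
  have Z_flow: "(Z has_vector_derivative commutator A (Z r)) (at r)" for r
    unfolding Z_def by (rule commutator_flow_reflect_transpose[OF assms(1) flow])
  have "trace (X 0 ** X 0) = trace (X (t/2) ** X (t/2))"
    by (rule commutator_flow_trace_mult_const[OF flow flow])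
  also have "\<dots> \<le> trace (X (t/2) ** Z (t/2))"
    using trace_square_le_trace_mult_transpose by (simp add: Z_def)
  also have "\<dots> = trace (X 0 ** Z 0)"
    by (rule commutator_flow_trace_mult_const[OF flow Z_flow])
  also have "\<dots> = trace (transpose (X t ** X 0))"
    using assms(2) by (simp add: Z_def matrix_transpose_mul)
  also have "\<dots> = trace (X 0 ** X t)"
    by (simp add: trace_transpose trace_mul_sym[of "X t"])
  finally show ?thesis .
qed

lemma forced_commutator_flow_has_derivative_trace_mult:
  fixes V W :: "real \<Rightarrow> real^'n^'n"
  assumes V': "\<And>t. (V has_vector_derivative W t) (at t)"
    and W': "\<And>t. (W has_vector_derivative commutator A (W t)) (at t)"
    and W_eq: "\<And>t. W t = commutator A (V t) + B"
  shows "((\<lambda>t. trace (V t ** W t)) has_real_derivative trace (B ** W t)) (at t)"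
proof -
  have "trace (W t ** W t) = trace (commutator A (V t) ** W t) + trace (B ** W t)"
    by (metis W_eq matrix_add_rdistrib trace_add)
  then show ?thesis
    using has_real_derivative_trace_mult[OF V'[of t] W'[of t]] trace_commutator_mult[of A "V t" "W t"]
    by simp
qed

lemma DERIV_nonneg_imp_mult_nonneg:
  fixes f :: "real \<Rightarrow> real"
  assumes "\<And>t. (f has_real_derivative f' t) (at t)" and "\<And>t. 0 \<le> f' t" and "f 0 = 0"
  shows "0 \<le> t * f t"
proof -
  have mono: "\<exists>y. DERIV f x :> y \<and> 0 \<le> y" for x
    using assms(1,2) by blast
  show ?thesis
  proof (cases "0 \<le> t")
    case True
    then show ?thesis
      using DERIV_nonneg_imp_nondecreasing[OF True mono] assms(3) by simp
  next
    case False
    then show ?thesis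
      using DERIV_nonneg_imp_nondecreasing[of t 0 f] mono assms(3) by (simp add: mult_nonpos_nonpos)
  qed
qed

lemma DERIV_mult_nonneg_imp_ge_at_0:
  fixes f :: "real \<Rightarrow> real"
  assumes "\<And>t. (f has_real_derivative f' t) (at t)" and "\<And>t. 0 \<le> t * f' t"
  shows "f 0 \<le> f t"
proof (cases t "0::real" rule: linorder_cases)
  case less
  then obtain z where "z < 0" and "f t - f 0 = t * f' z"
    using MVT2[of t 0 f f'] assms(1) by fastforce
  moreover have "f' z \<le> 0"
    using assms(2)[of z] \<open>z < 0\<close> by (simp add: zero_le_mult_iff)
  then have "0 \<le> t * f' z"
    using less by (intro mult_nonpos_nonpos) auto
  ultimately show ?thesis by linarith
next
  case equal
  then show ?thesis by simp
next
  case greater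
  then obtain z where "0 < z" and "f t - f 0 = t * f' z"
    using MVT2[of 0 t f f'] assms(1) by auto
  moreover have "0 \<le> f' z"
    using assms(2)[of z] \<open>0 < z\<close> by (simp add: zero_le_mult_iff)
  then have "0 \<le> t * f' z"
    using greater by simp
  ultimately show ?thesis by linarith
qed

theorem lemma9:
  fixes S \<alpha> :: "real^'n^'n" and V :: "real \<Rightarrow> real^'n^'n"
  assumes "transpose S = S" and "transpose \<alpha> = \<alpha>"
    and "\<And>t. (V has_vector_derivative (S ** V t - V t ** S + \<alpha>)) (at t)"
    and "V 0 = 0"
  shows "\<forall>t. trace (V t ** V t) \<ge> t\<^sup>2 * trace (\<alpha> ** \<alpha>)"
proof
  fix T
  define W where "W t = commutator S (V t) + \<alpha>" for t
  define K where "K = trace (\<alpha> ** \<alpha>)"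
  have V': "(V has_vector_derivative W t) (at t)" for t
    using assms(3) by (simp add: W_def commutator_def)
  have W': "(W has_vector_derivative commutator S (W t)) (at t)" for t
    using has_vector_derivative_add[OF has_vector_derivative_commutator[OF V'] has_vector_derivative_const]
    by (simp add: W_def[abs_def])
  have "W 0 = \<alpha>"
    using assms(4) by (simp add: W_def commutator_def)
  then have K_le: "K \<le> trace (\<alpha> ** W t)" for t
    using commutator_flow_trace_mult_ge[OF assms(1) _ W'] assms(2) by (simp add: K_def)
  define h where "h t = trace (V t ** W t) - t * K" for t
  have "(h has_real_derivative trace (\<alpha> ** W t) - K) (at t)" for t
    unfolding h_def[abs_def]
    using forced_commutator_flow_has_derivative_trace_mult[OF V' W' W_def]
    by (auto intro!: derivative_eq_intros)
  then have h_sign: "0 \<le> t * h t" for t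
    by (rule DERIV_nonneg_imp_mult_nonneg) (use K_le assms(4) in \<open>simp_all add: h_def trace_def\<close>)
  define g where "g t = trace (V t ** V t) - t\<^sup>2 * K" for t
  have "(g has_real_derivative 2 * h t) (at t)" for t
    unfolding g_def[abs_def]
    using has_real_derivative_trace_mult[OF V' V'] trace_mul_sym[of "W t" "V t"]
    by (auto intro!: derivative_eq_intros simp: h_def algebra_simps)
  then have "g 0 \<le> g T"
    by (rule DERIV_mult_nonneg_imp_ge_at_0) (use h_sign in simp)
  then show "T\<^sup>2 * trace (\<alpha> ** \<alpha>) \<le> trace (V T ** V T)"
    using assms(4) by (simp add: g_def K_def trace_def)
qed

end
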